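(* Let $\mathcal F=\{F_1,\dots,F_k\}$, $\mathcal I=\{0,1\}^k\setminus\{\boldsymbol 0\}$, $\mathcal I_0=\{0,1\}^k$, $I=2^k-1$, let $\mathcal F_{asc}$ be an ascending class of subsets of $\mathcal F$, $\mathcal F_{des}=2^{\mathcal F}\setminus\mathcal F_{asc}\setminus\{\varnothing\}$, and let $\mathbf A$ be the design matrix of the HAS model generated by $\mathcal F_{asc}$ (rows indexed by $W\in\mathcal F_{des}$, columns by $\boldsymbol i\in\mathcal I$, entry $1$ iff $W\subseteq\phi(\boldsymbol i)$). Let $\mathcal X_{\mathbf A}$ be the associated variety and $\overline{\mathcal X}_{\mathbf A}$ its projective closure, with the extra homogenizing coordinate $p_0$ corresponding to the zero cell $\boldsymbol 0$. Then the intersection of $\overline{\mathcal X}_{\mathbf A}$ with the interior of the $I$-dimensional simplex $\mathrm{int}(\Delta_I)$ is homeomorphic to the hierarchical log-linear model $LL(\mathcal F_{asc})$ on $\mathcal I_0$.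
   Context: $\phi(\boldsymbol i)$ is the set of features whose coordinate in $\boldsymbol i$ equals $1$. $\mathcal X_{\mathbf A}=\{\boldsymbol p\in\mathbb R^{I}_{\ge0}:\ \boldsymbol p^{\boldsymbol d^+}=\boldsymbol p^{\boldsymbol d^-}\ \text{for all integer }\boldsymbol d\in\mathrm{Ker}(\mathbf A)\}$, where $\boldsymbol d^\pm$ are the positive and negative parts of $\boldsymbol d$ and powers are componentwise monomials. The projective closure $\overline{\mathcal X}_{\mathbf A}$ is the smallest projective variety in projective space with homogeneous coordinates $(p_0:p(\boldsymbol i))_{\boldsymbol i\in\mathcal I}$ whose dehomogenization at $p_0=1$ is $\mathcal X_{\mathbf A}$ (obtained by homogenizing, with $p_0$, the polynomials of a Gröbner basis of the ideal of $\mathcal X_{\mathbf A}$). Its intersection with $\mathrm{int}(\Delta_I)$ means the set of strictly positive vectors $(p_0,(p(\boldsymbol i))_{\boldsymbol i\in\mathcal I})$ with coordinates summing to $1$ lying in (the cone of) $\overline{\mathcal X}_{\mathbf A}$. $LL(\mathcal F_{asc})$ is the set of strictly positive probability distributions $\boldsymbol p$ on $\mathcal I_0$ such that, writing $\log p(\boldsymbol i)=\sum_{V\subseteq\phi(\boldsymbol i)}\beta_V$ ($V$ over all subsets of $\mathcal F$, including $\varnothing$; a unique representation), $\beta_V=0$ for all $V\in\mathcal F_{asc}$. *)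

theory Defs
  imports "HOL-Analysis.Analysis"
begin

text \<open>Features: the finite type 'f (so F = UNIV, k = CARD('f) \<ge> 1).
  Cells i \<in> {0,1}^k are identified with subsets of features, i.e. with phi(i);
  the zero cell is {}. Points of R^(I_0) are vectors of type real ^ ('f set);
  the coordinate at {} is the homogenizing coordinate p_0.\<close>

definition cells_I :: "'f::finite set set" where
  "cells_I = UNIV - {{}}"

definition ascending_class :: "'f::finite set set \<Rightarrow> bool" where
  "ascending_class Fa \<longleftrightarrow> {} \<notin> Fa \<and> (\<forall>V\<in>Fa. \<forall>W. V \<subseteq> W \<longrightarrow> W \<in> Fa)"

definition F_des :: "'f::finite set set \<Rightarrow> 'f set set" where
  "F_des Fa = UNIV - Fa - {{}}"

definition design_matrix :: "'f::finite set \<Rightarrow> 'f set \<Rightarrow> int" where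
  "design_matrix W i = (if W \<subseteq> i then 1 else 0)"

definition int_kernel :: "'f::finite set set \<Rightarrow> ('f set \<Rightarrow> int) set" where
  "int_kernel Fa = {d. d {} = 0 \<and>
     (\<forall>W\<in>F_des Fa. (\<Sum>i\<in>cells_I. design_matrix W i * d i) = 0)}"

definition monom_pos :: "('f::finite set \<Rightarrow> real) \<Rightarrow> ('f set \<Rightarrow> int) \<Rightarrow> real" where
  "monom_pos p d = (\<Prod>i\<in>cells_I. p i ^ nat (d i))"

definition monom_neg :: "('f::finite set \<Rightarrow> real) \<Rightarrow> ('f set \<Rightarrow> int) \<Rightarrow> real" where
  "monom_neg p d = (\<Prod>i\<in>cells_I. p i ^ nat (- d i))"

definition X_A :: "'f::finite set set \<Rightarrow> ('f set \<Rightarrow> real) set" where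
  "X_A Fa = {p. p {} = 0 \<and> (\<forall>i\<in>cells_I. p i \<ge> 0) \<and>
     (\<forall>d\<in>int_kernel Fa. monom_pos p d = monom_neg p d)}"

text \<open>Real polynomials in the variables p(i), i \<in> I_0 (p_0 = p({})):
  coefficient functions on exponent vectors with finite support.\<close>
definition is_poly :: "(('f::finite set \<Rightarrow> nat) \<Rightarrow> real) \<Rightarrow> bool" where
  "is_poly c \<longleftrightarrow> finite {m. c m \<noteq> 0}"

definition homogeneous_poly :: "(('f::finite set \<Rightarrow> nat) \<Rightarrow> real) \<Rightarrow> bool" where
  "homogeneous_poly c \<longleftrightarrow> (\<exists>n. \<forall>m. c m \<noteq> 0 \<longrightarrow> (\<Sum>v\<in>UNIV. m v) = n)"

definition poly_eval :: "(('f::finite set \<Rightarrow> nat) \<Rightarrow> real) \<Rightarrow> real ^ ('f set) \<Rightarrow> real" where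
  "poly_eval c q = (\<Sum>m\<in>{m. c m \<noteq> 0}. c m * (\<Prod>v\<in>UNIV. (q $ v) ^ m v))"

definition homog_pt :: "('f::finite set \<Rightarrow> real) \<Rightarrow> real ^ ('f set)" where
  "homog_pt p = (\<chi> i. if i = {} then 1 else p i)"

text \<open>(Affine cone over) the projective closure: common zeros of all homogeneous
  polynomials vanishing on the points (1 : p), p \<in> X_A, i.e. the smallest projective
  variety whose dehomogenization at p_0 = 1 contains X_A.\<close>
definition proj_closure :: "'f::finite set set \<Rightarrow> (real ^ ('f set)) set" where
  "proj_closure Fa = {q. \<forall>c. is_poly c \<and> homogeneous_poly c \<and>
      (\<forall>p\<in>X_A Fa. poly_eval c (homog_pt p) = 0) \<longrightarrow> poly_eval c q = 0}"

definition int_simplex :: "(real ^ ('f::finite set)) set" where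
  "int_simplex = {q. (\<forall>i. q $ i > 0) \<and> (\<Sum>i\<in>UNIV. q $ i) = 1}"

definition LL :: "'f::finite set set \<Rightarrow> (real ^ ('f set)) set" where
  "LL Fa = {p. (\<forall>i. p $ i > 0) \<and> (\<Sum>i\<in>UNIV. p $ i) = 1 \<and>
     (\<exists>\<beta>::'f set \<Rightarrow> real. (\<forall>i. ln (p $ i) = (\<Sum>V\<in>Pow i. \<beta> V)) \<and>
        (\<forall>V\<in>Fa. \<beta> V = 0))}"

end

theory Submission
  imports Defs
begin

text \<open>On strictly positive points both sets are cut out by log-linear conditions, and they
  coincide, so the identity is the homeomorphism. Moebius inversion on the Boolean lattice
  writes \<open>ln q(i) = \<Sum>V\<subseteq>i. \<beta>\<^sub>V\<close> with
  \<open>\<beta>\<^sub>V = \<Sum>U\<subseteq>V. (-1)\<^bsup>|V|+|U|\<^esup> ln q(U)\<close>. For \<open>V \<in> \<F>\<^sub>a\<^sub>s\<^sub>c\<close> this Moebius row, restricted to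
  \<open>\<I>\<close>, lies in \<open>Ker A\<close>, since its sum over the supersets of any \<open>W \<noteq> V\<close> vanishes. Homogenizing the
  corresponding binomial with \<open>p\<^sub>0\<close> gives a homogeneous polynomial vanishing on the closure,
  and its logarithm at \<open>q\<close> is exactly \<open>\<beta>\<^sub>V\<close>; hence \<open>\<beta>\<^sub>V = 0\<close> on the closure. Conversely, if \<open>\<beta>\<close>
  vanishes on \<open>\<F>\<^sub>a\<^sub>s\<^sub>c\<close>, then \<open>ln (q/q\<^sub>0)\<close> lies in the row space of \<open>A\<close>, so \<open>q/q\<^sub>0 \<in> \<X>\<^sub>A\<close>, and \<open>q\<close>
  lies in the closure because the closure is a cone.\<close>

lemma sum_alternating_subsupersets:
  assumes "finite S" "U \<subset> S"
  shows "(\<Sum>T | T \<subseteq> S \<and> U \<subseteq> T. (-1::'b::ring_1) ^ card T) = 0"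
proof (rule sum_alternating_cancels)
  show "finite {T. T \<subseteq> S \<and> U \<subseteq> T}"
    using assms(1) by simp
  show "card {T \<in> {T. T \<subseteq> S \<and> U \<subseteq> T}. even (card T)}
      = card {T \<in> {T. T \<subseteq> S \<and> U \<subseteq> T}. odd (card T)}"
    using card_subsupersets_even_odd[OF assms] by (simp add: conj_assoc)
qed

lemma moebius_inversion_Pow:
  fixes f :: "'a set \<Rightarrow> 'b::comm_ring_1"
  assumes "finite S"
  shows "f S = (\<Sum>V\<in>Pow S. \<Sum>U\<in>Pow V. (-1) ^ card V * (-1) ^ card U * f U)"
proof -
  have "f S = (\<Sum>V\<in>Pow S. (-1) ^ card V * (\<Sum>U\<in>Pow V. (-1) ^ card U * f U))"
    by (rule inclusion_exclusion_symmetric[OF refl assms])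
  then show ?thesis
    by (simp add: sum_distrib_left mult.assoc)
qed

lemma prod_pow_pos_part_eq_neg_part_iff:
  fixes x :: "'a \<Rightarrow> real" and e :: "'a \<Rightarrow> int"
  assumes "finite S" and pos: "\<And>v. v \<in> S \<Longrightarrow> x v > 0"
  shows "(\<Prod>v\<in>S. x v ^ nat (e v)) = (\<Prod>v\<in>S. x v ^ nat (- e v))
    \<longleftrightarrow> (\<Sum>v\<in>S. of_int (e v) * ln (x v)) = 0"
proof -
  have nat_parts: "real (nat k) - real (nat (- k)) = of_int k" for k :: int
    by (cases "k \<ge> 0") auto
  have ln_prod_pow: "ln (\<Prod>v\<in>S. x v ^ n v) = (\<Sum>v\<in>S. real (n v) * ln (x v))"
    for n :: "'a \<Rightarrow> nat"
    using pos by (subst ln_prod) (auto simp: assms(1) ln_realpow less_imp_neq[symmetric])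
  have "ln (\<Prod>v\<in>S. x v ^ nat (e v)) - ln (\<Prod>v\<in>S. x v ^ nat (- e v))
      = (\<Sum>v\<in>S. (real (nat (e v)) - real (nat (- e v))) * ln (x v))"
    by (simp add: ln_prod_pow left_diff_distrib sum_subtractf)
  also have "\<dots> = (\<Sum>v\<in>S. of_int (e v) * ln (x v))"
    by (simp only: nat_parts)
  finally have ln_diff: "ln (\<Prod>v\<in>S. x v ^ nat (e v)) - ln (\<Prod>v\<in>S. x v ^ nat (- e v))
      = (\<Sum>v\<in>S. of_int (e v) * ln (x v))" .
  have "(\<Prod>v\<in>S. x v ^ nat (e v)) > 0" "(\<Prod>v\<in>S. x v ^ nat (- e v)) > 0"
    using pos by (auto intro: prod_pos)
  then have "(\<Prod>v\<in>S. x v ^ nat (e v)) = (\<Prod>v\<in>S. x v ^ nat (- e v))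
      \<longleftrightarrow> ln (\<Prod>v\<in>S. x v ^ nat (e v)) = ln (\<Prod>v\<in>S. x v ^ nat (- e v))"
    by (rule ln_inj_iff[symmetric])
  with ln_diff show ?thesis
    by linarith
qed

lemma poly_eval_scaleR_homogeneous:
  assumes "\<And>m. c m \<noteq> 0 \<Longrightarrow> (\<Sum>v\<in>UNIV. m v) = n"
  shows "poly_eval c (a *\<^sub>R q) = a ^ n * poly_eval c q"
proof -
  have "(\<Prod>v\<in>UNIV. ((a *\<^sub>R q) $ v) ^ m v) = a ^ n * (\<Prod>v\<in>UNIV. (q $ v) ^ m v)"
    if "c m \<noteq> 0" for m
  proof -
    have "(\<Prod>v\<in>UNIV. a ^ m v) = a ^ n"
      using assms[OF that] by (simp flip: power_sum)
    then show ?thesis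
      by (simp add: power_mult_distrib prod.distrib)
  qed
  then show ?thesis
    unfolding poly_eval_def by (simp add: sum_distrib_left mult_ac)
qed

lemma proj_closure_scaleR:
  assumes "q \<in> proj_closure Fa"
  shows "a *\<^sub>R q \<in> proj_closure Fa"
  unfolding proj_closure_def
proof (intro CollectI allI impI)
  fix c assume c: "is_poly c \<and> homogeneous_poly c \<and> (\<forall>p\<in>X_A Fa. poly_eval c (homog_pt p) = 0)"
  then obtain n where "\<And>m. c m \<noteq> 0 \<Longrightarrow> (\<Sum>v\<in>UNIV. m v) = n"
    unfolding homogeneous_poly_def by blast
  then have "poly_eval c (a *\<^sub>R q) = a ^ n * poly_eval c q"
    by (rule poly_eval_scaleR_homogeneous)
  also have "poly_eval c q = 0"
    using assms c unfolding proj_closure_def by blast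
  finally show "poly_eval c (a *\<^sub>R q) = 0"
    by simp
qed

lemma homog_pt_in_proj_closure:
  assumes "p \<in> X_A Fa"
  shows "homog_pt p \<in> proj_closure Fa"
  using assms unfolding proj_closure_def by blast

lemma UNIV_eq_insert_empty_cells_I: "(UNIV :: 'f::finite set set) = insert {} cells_I"
  and empty_notin_cells_I: "{} \<notin> cells_I"
  by (auto simp: cells_I_def)

definition binomial_poly :: "('f::finite set \<Rightarrow> int) \<Rightarrow> ('f set \<Rightarrow> nat) \<Rightarrow> real" where
  "binomial_poly e m =
     (if m = (\<lambda>v. nat (e v)) then 1 else 0) - (if m = (\<lambda>v. nat (- e v)) then 1 else 0)"

lemma is_poly_binomial_poly: "is_poly (binomial_poly e)"
proof -
  have "{m. binomial_poly e m \<noteq> 0} \<subseteq> {\<lambda>v. nat (e v), \<lambda>v. nat (- e v)}"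
    by (auto simp: binomial_poly_def)
  then show ?thesis
    unfolding is_poly_def by (rule finite_subset) simp
qed

lemma homogeneous_binomial_poly:
  assumes "(\<Sum>v\<in>UNIV. e v) = 0"
  shows "homogeneous_poly (binomial_poly e)"
proof -
  have nat_parts: "int (nat k) - int (nat (- k)) = k" for k :: int
    by (cases "k \<ge> 0") auto
  have "int (\<Sum>v\<in>UNIV. nat (e v)) - int (\<Sum>v\<in>UNIV. nat (- e v))
      = (\<Sum>v\<in>UNIV. int (nat (e v)) - int (nat (- e v)))"
    by (simp only: of_nat_sum sum_subtractf)
  also have "\<dots> = (\<Sum>v\<in>UNIV. e v)"
    by (simp only: nat_parts)
  finally have "int (\<Sum>v\<in>UNIV. nat (e v)) - int (\<Sum>v\<in>UNIV. nat (- e v)) = (\<Sum>v\<in>UNIV. e v)" .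
  then have "(\<Sum>v\<in>UNIV. nat (e v)) = (\<Sum>v\<in>UNIV. nat (- e v))"
    using assms by linarith
  then show ?thesis
    unfolding homogeneous_poly_def binomial_poly_def
    by (intro exI[of _ "\<Sum>v\<in>UNIV. nat (e v)"]) (auto split: if_splits)
qed

lemma poly_eval_binomial_poly:
  "poly_eval (binomial_poly e) q
     = (\<Prod>v\<in>UNIV. (q $ v) ^ nat (e v)) - (\<Prod>v\<in>UNIV. (q $ v) ^ nat (- e v))"
proof (cases "(\<lambda>v. nat (e v)) = (\<lambda>v. nat (- e v))")
  case True
  then have "binomial_poly e = (\<lambda>m. 0)"
    by (auto simp: binomial_poly_def fun_eq_iff)
  moreover have "nat (e v) = nat (- e v)" for v
    using True by (rule fun_cong)
  ultimately show ?thesis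
    by (simp add: poly_eval_def)
next
  case False
  then have "{m. binomial_poly e m \<noteq> 0} = {\<lambda>v. nat (e v), \<lambda>v. nat (- e v)}"
    by (auto simp: binomial_poly_def)
  with False show ?thesis
    by (simp add: poly_eval_def binomial_poly_def)
qed

text \<open>Homogenizing \<open>p\<^sup>d\<^sup>+ - p\<^sup>d\<^sup>-\<close> with \<open>p\<^sub>0\<close> amounts to giving the zero cell the exponent
  \<open>-\<Sum>d\<close>, which makes the exponent vector sum to zero.\<close>

definition homog_exponent :: "('f::finite set \<Rightarrow> int) \<Rightarrow> 'f set \<Rightarrow> int" where
  "homog_exponent d = d({} := - (\<Sum>i\<in>cells_I. d i))"

lemma sum_homog_exponent: "(\<Sum>v\<in>UNIV. homog_exponent d v) = 0"
  unfolding UNIV_eq_insert_empty_cells_I homog_exponent_def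
  by (simp add: empty_notin_cells_I) (auto simp: cells_I_def intro!: sum.cong)

lemma prod_homog_pt_homog_exponent:
  "(\<Prod>v\<in>UNIV. (homog_pt p $ v) ^ nat (homog_exponent d v)) = monom_pos p d"
  "(\<Prod>v\<in>UNIV. (homog_pt p $ v) ^ nat (- homog_exponent d v)) = monom_neg p d"
  unfolding UNIV_eq_insert_empty_cells_I monom_pos_def monom_neg_def
  by (simp_all add: empty_notin_cells_I homog_pt_def homog_exponent_def)
     (auto simp: cells_I_def intro!: prod.cong)

lemma proj_closure_binomial:
  assumes "d \<in> int_kernel Fa" "q \<in> proj_closure Fa"
  shows "poly_eval (binomial_poly (homog_exponent d)) q = 0"
proof -
  have "poly_eval (binomial_poly (homog_exponent d)) (homog_pt p) = 0" if "p \<in> X_A Fa" for p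
    using that assms(1)
    by (simp add: poly_eval_binomial_poly prod_homog_pt_homog_exponent X_A_def)
  then show ?thesis
    using assms(2) is_poly_binomial_poly homogeneous_binomial_poly[OF sum_homog_exponent]
    unfolding proj_closure_def by blast
qed

lemma positive_proj_closure_log_binomial:
  assumes "d \<in> int_kernel Fa" "q \<in> proj_closure Fa" "\<forall>v. q $ v > 0"
  shows "(\<Sum>v\<in>UNIV. of_int (homog_exponent d v) * ln (q $ v)) = 0"
proof -
  have "(\<Prod>v\<in>UNIV. (q $ v) ^ nat (homog_exponent d v))
      = (\<Prod>v\<in>UNIV. (q $ v) ^ nat (- homog_exponent d v))"
    using proj_closure_binomial[OF assms(1,2)] by (simp add: poly_eval_binomial_poly)
  then show ?thesis
    using prod_pow_pos_part_eq_neg_part_iff[of UNIV "\<lambda>v. q $ v" "homog_exponent d"] assms(3)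
    by simp
qed

text \<open>\<open>moebius_vector V U\<close> is the Moebius function \<open>\<mu>(U, V)\<close> of the Boolean lattice.\<close>

definition moebius_vector :: "'f::finite set \<Rightarrow> 'f set \<Rightarrow> int" where
  "moebius_vector V U = (if U \<subseteq> V then (-1) ^ card V * (-1) ^ card U else 0)"

lemma sum_moebius_vector_supersets:
  assumes "W \<noteq> V"
  shows "(\<Sum>U | W \<subseteq> U. moebius_vector V U) = 0"
proof (cases "W \<subseteq> V")
  case True
  then have "W \<subset> V"
    using assms by blast
  have "(\<Sum>U | W \<subseteq> U. moebius_vector V U)
      = (\<Sum>U | U \<subseteq> V \<and> W \<subseteq> U. (-1) ^ card V * (-1) ^ card U)"
    unfolding moebius_vector_def by (rule sum.mono_neutral_cong_right) auto
  also have "\<dots> = (-1) ^ card V * (\<Sum>U | U \<subseteq> V \<and> W \<subseteq> U. (-1) ^ card U)"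
    by (simp add: sum_distrib_left)
  also have "\<dots> = 0"
    using sum_alternating_subsupersets[OF _ \<open>W \<subset> V\<close>] by simp
  finally show ?thesis .
next
  case False
  then show ?thesis
    by (intro sum.neutral) (auto simp: moebius_vector_def)
qed

lemma moebius_vector_in_int_kernel:
  assumes "V \<in> Fa"
  shows "(moebius_vector V)({} := 0) \<in> int_kernel Fa"
  unfolding int_kernel_def
proof (intro CollectI conjI ballI)
  fix W assume "W \<in> F_des Fa"
  then have "W \<noteq> {}" "W \<noteq> V"
    using assms by (auto simp: F_des_def)
  have "(\<Sum>i\<in>cells_I. design_matrix W i * ((moebius_vector V)({} := 0)) i)
      = (\<Sum>U | W \<subseteq> U. moebius_vector V U)"
    using \<open>W \<noteq> {}\<close> unfolding design_matrix_def cells_I_def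
    by (intro sum.mono_neutral_cong_right) auto
  also have "\<dots> = 0"
    using \<open>W \<noteq> V\<close> by (rule sum_moebius_vector_supersets)
  finally show "(\<Sum>i\<in>cells_I. design_matrix W i * ((moebius_vector V)({} := 0)) i) = 0" .
qed simp

lemma homog_exponent_moebius_vector:
  assumes "V \<noteq> {}"
  shows "homog_exponent ((moebius_vector V)({} := 0)) = moebius_vector V"
proof -
  have "(\<Sum>U | {} \<subseteq> U. moebius_vector V U) = 0"
    using assms[symmetric] by (rule sum_moebius_vector_supersets)
  then have "moebius_vector V {} + (\<Sum>i\<in>cells_I. moebius_vector V i) = 0"
    by (simp add: UNIV_eq_insert_empty_cells_I empty_notin_cells_I)
  moreover have "(\<Sum>i\<in>cells_I. ((moebius_vector V)({} := 0)) i) = (\<Sum>i\<in>cells_I. moebius_vector V i)"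
    using empty_notin_cells_I by (intro sum.cong) auto
  ultimately show ?thesis
    by (auto simp: homog_exponent_def)
qed

lemma proj_closure_imp_log_linear:
  assumes asc: "ascending_class Fa" and q: "q \<in> proj_closure Fa" "\<forall>v. q $ v > 0"
  shows "\<exists>\<beta>. (\<forall>i. ln (q $ i) = (\<Sum>V\<in>Pow i. \<beta> V)) \<and> (\<forall>V\<in>Fa. \<beta> V = 0)"
proof (intro exI conjI allI ballI)
  define \<beta> where "\<beta> V = (\<Sum>U\<in>Pow V. (-1) ^ card V * (-1) ^ card U * ln (q $ U))" for V
  show "ln (q $ i) = (\<Sum>V\<in>Pow i. \<beta> V)" for i
    unfolding \<beta>_def by (rule moebius_inversion_Pow) simp
  fix V assume "V \<in> Fa"
  then have "V \<noteq> {}"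
    using asc by (auto simp: ascending_class_def)
  have "\<beta> V = (\<Sum>U\<in>UNIV. of_int (moebius_vector V U) * ln (q $ U))"
    unfolding \<beta>_def moebius_vector_def by (intro sum.mono_neutral_cong_left) auto
  also have "\<dots> = (\<Sum>U\<in>UNIV. of_int (homog_exponent ((moebius_vector V)({} := 0)) U) * ln (q $ U))"
    by (simp add: homog_exponent_moebius_vector[OF \<open>V \<noteq> {}\<close>])
  also have "\<dots> = 0"
    using moebius_vector_in_int_kernel[OF \<open>V \<in> Fa\<close>] q
    by (rule positive_proj_closure_log_binomial)
  finally show "\<beta> V = 0" .
qed

lemma log_linear_in_X_A:
  assumes pos: "\<forall>i\<in>cells_I. p i > 0" and "p {} = 0"
    and log_p: "\<forall>i\<in>cells_I. ln (p i) = (\<Sum>W\<in>F_des Fa. of_int (design_matrix W i) * \<gamma> W)"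
  shows "p \<in> X_A Fa"
  unfolding X_A_def
proof (intro CollectI conjI ballI)
  fix d assume d: "d \<in> int_kernel Fa"
  have "(\<Sum>i\<in>cells_I. of_int (d i) * ln (p i))
      = (\<Sum>i\<in>cells_I. \<Sum>W\<in>F_des Fa. \<gamma> W * of_int (design_matrix W i * d i))"
    using log_p by (simp add: sum_distrib_left mult_ac)
  also have "\<dots> = (\<Sum>W\<in>F_des Fa. \<gamma> W * of_int (\<Sum>i\<in>cells_I. design_matrix W i * d i))"
    by (subst sum.swap) (simp add: sum_distrib_left)
  also have "\<dots> = 0"
    using d by (simp add: int_kernel_def)
  finally show "monom_pos p d = monom_neg p d"
    unfolding monom_pos_def monom_neg_def
    using prod_pow_pos_part_eq_neg_part_iff[of cells_I p d] pos by simp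
qed (use assms in \<open>auto intro: less_imp_le\<close>)

lemma log_linear_imp_proj_closure:
  assumes pos: "\<forall>v. q $ v > 0" and log_q: "\<forall>i. ln (q $ i) = (\<Sum>V\<in>Pow i. \<beta> V)"
    and \<beta>_Fa: "\<forall>V\<in>Fa. \<beta> V = 0"
  shows "q \<in> proj_closure Fa"
proof -
  define p where "p i = (if i = {} then 0 else q $ i / q $ {})" for i
  have "ln (p i) = (\<Sum>W\<in>F_des Fa. of_int (design_matrix W i) * \<beta> W)" if "i \<in> cells_I" for i
  proof -
    have "ln (p i) = ln (q $ i) - ln (q $ {})"
      using that pos[rule_format, of i] pos[rule_format, of "{}"]
      by (simp add: p_def cells_I_def ln_div)
    also have "\<dots> = (\<Sum>V\<in>Pow i - {{}}. \<beta> V)"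
      using log_q by (simp add: sum.remove[of "Pow i" "{}"])
    also have "\<dots> = (\<Sum>W\<in>F_des Fa. of_int (design_matrix W i) * \<beta> W)"
      using \<beta>_Fa unfolding F_des_def design_matrix_def
      by (intro sum.mono_neutral_cong) auto
    finally show ?thesis .
  qed
  then have "p \<in> X_A Fa"
    using pos by (intro log_linear_in_X_A) (auto simp: p_def cells_I_def)
  then have "q $ {} *\<^sub>R homog_pt p \<in> proj_closure Fa"
    by (intro proj_closure_scaleR homog_pt_in_proj_closure)
  moreover have "q $ {} *\<^sub>R homog_pt p = q"
    using pos by (simp add: vec_eq_iff homog_pt_def p_def less_imp_neq[symmetric])
  ultimately show ?thesis
    by simp
qed

theorem theorem6:
  fixes Fa :: "'f::finite set set"
  assumes "ascending_class Fa"
  shows "(proj_closure Fa \<inter> int_simplex) homeomorphic LL Fa"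
proof -
  have "proj_closure Fa \<inter> int_simplex = LL Fa"
    using proj_closure_imp_log_linear[OF assms] log_linear_imp_proj_closure
    unfolding int_simplex_def LL_def by blast
  then show ?thesis
    by (simp add: homeomorphic_refl)
qed

end
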